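(* Let $A,B\in\mathcal A_n$. The following are equivalent: (1) $A\le B$ in ASM order; (2) $\mathbf x^A-\mathbf x^B$ is TNN; (3) $\mathbf x^A-\mathbf x^B$ has the SFL property.
   Context: $\mathcal A_n$ is the set of $n\times n$ alternating sign matrices (entries in $\{-1,0,1\}$, partial row and column sums in $\{0,1\}$, full row and column sums $1$). Corner sum matrix $\widetilde A(i,j)=\sum_{p\le i,q\le j}a_{pq}$; ASM order: $A\le B$ iff $\widetilde A(i,j)\ge\widetilde B(i,j)$ for all $i,j$. Let $x=(x_{ij})$ be a matrix of commuting indeterminates and $\mathbf x^A=\prod_{i,j}x_{ij}^{a_{ij}}$. A real matrix is totally nonnegative (TNN) if all its minors are nonnegative. A rational function $g(x)$ is TNN if $g(M)\ge0$ for every real $n\times n$ TNN matrix $M$ at which $g(M)$ is defined. $g$ has the subtraction-free Laurent (SFL) property if $g=F/G$ where $F$ is a polynomial with nonnegative integer coefficients in the minors of $x$ and $G$ is a product of (nonnegative integer powers of) minors of $x$. *)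

theory Defs
  imports Complex_Main "Jordan_Normal_Form.Determinant" "Jordan_Normal_Form.DL_Submatrix"
begin

text \<open>Matrices are Jordan_Normal_Form matrices; indices run over 0..n-1.\<close>

definition is_ASM :: "nat \<Rightarrow> int mat \<Rightarrow> bool" where
  "is_ASM n A \<longleftrightarrow> A \<in> carrier_mat n n
     \<and> (\<forall>i<n. \<forall>j<n. A $$ (i,j) \<in> {-1, 0, 1})
     \<and> (\<forall>i<n. \<forall>j<n. (\<Sum>q\<le>j. A $$ (i,q)) \<in> {0, 1})
     \<and> (\<forall>i<n. \<forall>j<n. (\<Sum>p\<le>i. A $$ (p,j)) \<in> {0, 1})
     \<and> (\<forall>i<n. (\<Sum>q<n. A $$ (i,q)) = 1)
     \<and> (\<forall>j<n. (\<Sum>p<n. A $$ (p,j)) = 1)"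

definition corner_sum :: "int mat \<Rightarrow> nat \<Rightarrow> nat \<Rightarrow> int" where
  "corner_sum A i j = (\<Sum>p\<le>i. \<Sum>q\<le>j. A $$ (p,q))"

definition ASM_le :: "nat \<Rightarrow> int mat \<Rightarrow> int mat \<Rightarrow> bool" where
  "ASM_le n A B \<longleftrightarrow> (\<forall>i<n. \<forall>j<n. corner_sum A i j \<ge> corner_sum B i j)"

definition valid_minor :: "nat \<Rightarrow> nat set \<Rightarrow> nat set \<Rightarrow> bool" where
  "valid_minor n I J \<longleftrightarrow> I \<subseteq> {0..<n} \<and> J \<subseteq> {0..<n} \<and> I \<noteq> {} \<and> card I = card J"

definition minor :: "real mat \<Rightarrow> nat set \<Rightarrow> nat set \<Rightarrow> real" where
  "minor M I J = det (submatrix M I J)"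

definition TNN_mat :: "nat \<Rightarrow> real mat \<Rightarrow> bool" where
  "TNN_mat n M \<longleftrightarrow> M \<in> carrier_mat n n \<and> (\<forall>I J. valid_minor n I J \<longrightarrow> minor M I J \<ge> 0)"

definition mono_eval :: "nat \<Rightarrow> int mat \<Rightarrow> real mat \<Rightarrow> real" where
  "mono_eval n A M = (\<Prod>i<n. \<Prod>j<n. (M $$ (i,j)) powi (A $$ (i,j)))"

text \<open>The rational function x^A - x^B, and where it is defined (no zero entry
  raised to a negative power).\<close>
definition diff_eval :: "nat \<Rightarrow> int mat \<Rightarrow> int mat \<Rightarrow> real mat \<Rightarrow> real" where
  "diff_eval n A B M = mono_eval n A M - mono_eval n B M"

definition diff_defined :: "nat \<Rightarrow> int mat \<Rightarrow> int mat \<Rightarrow> real mat \<Rightarrow> bool" where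
  "diff_defined n A B M \<longleftrightarrow>
     (\<forall>i<n. \<forall>j<n. (A $$ (i,j) < 0 \<or> B $$ (i,j) < 0) \<longrightarrow> M $$ (i,j) \<noteq> 0)"

definition diff_TNN :: "nat \<Rightarrow> int mat \<Rightarrow> int mat \<Rightarrow> bool" where
  "diff_TNN n A B \<longleftrightarrow>
     (\<forall>M. TNN_mat n M \<and> diff_defined n A B M \<longrightarrow> diff_eval n A B M \<ge> 0)"

text \<open>A polynomial with nonnegative integer coefficients in the minors of x:
  a list of terms (c, ms), c a coefficient, ms a list of minors (I,J) whose
  product is the monomial (repetitions give powers).\<close>
type_synonym minor_idx = "nat set \<times> nat set"

definition minor_prod :: "real mat \<Rightarrow> minor_idx list \<Rightarrow> real" where
  "minor_prod M ms = (\<Prod>(I,J)\<leftarrow>ms. minor M I J)"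

definition minor_poly :: "real mat \<Rightarrow> (nat \<times> minor_idx list) list \<Rightarrow> real" where
  "minor_poly M F = (\<Sum>(c,ms)\<leftarrow>F. real c * minor_prod M ms)"

text \<open>SFL property of x^A - x^B: it equals F/G as rational functions, i.e.
  the two agree at every real n x n matrix where both are defined.\<close>
definition diff_SFL :: "nat \<Rightarrow> int mat \<Rightarrow> int mat \<Rightarrow> bool" where
  "diff_SFL n A B \<longleftrightarrow>
     (\<exists>F G. (\<forall>(c,ms)\<in>set F. \<forall>(I,J)\<in>set ms. valid_minor n I J)
          \<and> (\<forall>(I,J)\<in>set G. valid_minor n I J)
          \<and> (\<forall>M. M \<in> carrier_mat n n \<and> diff_defined n A B M \<and> minor_prod M G \<noteq> 0
                 \<longrightarrow> diff_eval n A B M = minor_poly M F / minor_prod M G))"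

end

theory Submission
  imports Defs
begin

text \<open>Write \<open>c(r,s)\<close> for the corner sum of \<open>A\<close> minus that of \<open>B\<close> at \<open>(r,s)\<close>. Since all ASMs have
  the same corner sums along the last row and column, \<open>x^B = x^A \<Prod> y(r,s)^c(r,s)\<close> with
  \<open>y(r,s) = x(r,s+1) x(r+1,s) / (x(r,s) x(r+1,s+1))\<close>. If all \<open>c(r,s) \<ge> 0\<close>, every \<open>y(r,s)\<close> lies in
  \<open>[0,1]\<close> at a TNN matrix with positive entries, because the contiguous 2\<times>2 minors are nonnegative;
  other TNN matrices are limits of these, obtained by adding small multiples of adjacent rows and
  columns. Writing \<open>y = N/D\<close>, the difference \<open>x^A - x^B = x^A (\<Prod>D - \<Prod>N) / \<Prod>D\<close> telescopes into a
  sum of products of entries and 2\<times>2 minors, which is the SFL property.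

  Conversely, if \<open>c(i,j) < 0\<close>, take the Cauchy matrix \<open>1/(a(p) + b(q))\<close> where \<open>a\<close> and \<open>b\<close> are steps
  from 1 to 2 after positions \<open>i\<close> and \<open>j\<close>. There \<open>x^A = (9/8)^(corner sum of A at (i,j))\<close> times a
  factor common to all ASMs, so \<open>x^A - x^B < 0\<close>. Perturbing the steps into strictly increasing
  sequences gives a totally positive matrix with the same sign, at which every TNN or SFL function is
  nonnegative.\<close>

section \<open>Determinants\<close>

lemma mat_index_eta: "M \<in> carrier_mat n m \<Longrightarrow> mat n m (($$) M) = M"
  by (auto intro!: eq_matI)

lemma det_add_multiples_of_row:
  fixes A :: "'a::comm_ring_1 mat"
  assumes A: "A \<in> carrier_mat n n" and m: "m < n"
  shows "det (mat n n (\<lambda>(i,j). if i < m then A $$ (i,j) + c i * A $$ (m,j) else A $$ (i,j))) = det A"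
proof -
  define L where "L = mat n n (\<lambda>(i,l). if i = l then 1 else if l = m \<and> i < m then c i else (0::'a))"
  have L: "L \<in> carrier_mat n n" unfolding L_def by auto
  have "det L = 1"
  proof -
    have "upper_triangular L" unfolding L_def by (intro upper_triangularI) auto
    thus ?thesis
      by (subst det_upper_triangular[OF _ L], unfold prod_list_diag_prod) (auto simp: L_def intro!: prod.neutral)
  qed
  moreover have "L * A = mat n n (\<lambda>(i,j). if i < m then A $$ (i,j) + c i * A $$ (m,j) else A $$ (i,j))"
  proof (rule eq_matI)
    fix i j assume "i < dim_row (mat n n (\<lambda>(i,j). if i < m then A $$ (i,j) + c i * A $$ (m,j) else A $$ (i,j)))"
      and "j < dim_col (mat n n (\<lambda>(i,j). if i < m then A $$ (i,j) + c i * A $$ (m,j) else A $$ (i,j)))"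
    hence i: "i < n" and j: "j < n" by auto
    have "(L * A) $$ (i,j) = (\<Sum>l<n. L $$ (i,l) * A $$ (l,j))"
      using i j L A by (auto simp: scalar_prod_def atLeast0LessThan)
    also have "\<dots> = (\<Sum>l<n. (if l = i then A $$ (i,j) else 0) + (if l = m \<and> i < m then c i * A $$ (m,j) else 0))"
      using i by (intro sum.cong) (auto simp: L_def)
    also have "\<dots> = (if i < m then A $$ (i,j) + c i * A $$ (m,j) else A $$ (i,j))"
      using i m by (simp add: sum.distrib)
    finally show "(L * A) $$ (i,j) = mat n n (\<lambda>(i,j). if i < m then A $$ (i,j) + c i * A $$ (m,j) else A $$ (i,j)) $$ (i,j)"
      using i j by simp
  qed (use L A in auto)
  ultimately show ?thesis using det_mult[OF L A] by simp
qed

lemma det_add_multiples_of_col: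
  fixes A :: "'a::comm_ring_1 mat"
  assumes A: "A \<in> carrier_mat n n" and m: "m < n"
  shows "det (mat n n (\<lambda>(i,j). if j < m then A $$ (i,j) + c j * A $$ (i,m) else A $$ (i,j))) = det A"
proof -
  have AT: "A\<^sup>T \<in> carrier_mat n n" using A by auto
  have "mat n n (\<lambda>(i,j). if j < m then A $$ (i,j) + c j * A $$ (i,m) else A $$ (i,j)) =
        (mat n n (\<lambda>(i,j). if i < m then A\<^sup>T $$ (i,j) + c i * A\<^sup>T $$ (m,j) else A\<^sup>T $$ (i,j)))\<^sup>T"
    using A m by (auto intro!: eq_matI)
  hence "det (mat n n (\<lambda>(i,j). if j < m then A $$ (i,j) + c j * A $$ (i,m) else A $$ (i,j))) = det A\<^sup>T"
    by (simp add: det_transpose[of _ n] det_add_multiples_of_row[OF AT m])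
  thus ?thesis using A by (simp add: det_transpose)
qed

lemma det_scale_rows_cols:
  fixes X :: "nat \<Rightarrow> nat \<Rightarrow> 'a::comm_ring_1"
  shows "det (mat n n (\<lambda>(i,j). r i * s j * X i j)) = (\<Prod>i<n. r i) * (\<Prod>j<n. s j) * det (mat n n (\<lambda>(i,j). X i j))"
proof -
  have "(\<Prod>i=0..<n. r i * s (p i) * X i (p i)) = (\<Prod>i<n. r i) * (\<Prod>j<n. s j) * (\<Prod>i=0..<n. X i (p i))"
    if p: "p permutes {0..<n}" for p
  proof -
    have "(\<Prod>i=0..<n. s (p i)) = (\<Prod>j=0..<n. s j)"
      using prod.permute[OF p, of s] by (simp add: comp_def)
    thus ?thesis by (simp add: prod.distrib atLeast0LessThan)
  qed
  hence "det (mat n n (\<lambda>(i,j). r i * s j * X i j))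
      = (\<Sum>p\<in>{p. p permutes {0..<n}}. (\<Prod>i<n. r i) * (\<Prod>j<n. s j) * (signof p * (\<Prod>i=0..<n. X i (p i))))"
    by (subst det_def'[of _ n]) (auto intro!: sum.cong)
  also have "\<dots> = (\<Prod>i<n. r i) * (\<Prod>j<n. s j) * det (mat n n (\<lambda>(i,j). X i j))"
    by (subst det_def'[of _ n]) (auto simp: sum_distrib_left intro!: sum.cong prod.cong)
  finally show ?thesis .
qed

lemma det_mat_Suc_unit_last_row:
  fixes X :: "nat \<Rightarrow> nat \<Rightarrow> 'a::comm_ring_1"
  assumes "\<And>j. j < k \<Longrightarrow> X k j = 0" and "X k k = 1"
  shows "det (mat (Suc k) (Suc k) (\<lambda>(i,j). X i j)) = det (mat k k (\<lambda>(i,j). X i j))"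
proof -
  let ?X = "mat (Suc k) (Suc k) (\<lambda>(i,j). X i j)"
  have "det ?X = (\<Sum>j<Suc k. ?X $$ (k,j) * cofactor ?X k j)"
    by (rule laplace_expansion_row) auto
  also have "\<dots> = det (mat_delete ?X k k)" using assms by (simp add: lessThan_Suc cofactor_def)
  also have "mat_delete ?X k k = mat k k (\<lambda>(i,j). X i j)"
    by (auto simp: mat_delete_def intro!: eq_matI)
  finally show ?thesis .
qed

lemma det_row_linear:
  fixes u v :: "nat \<Rightarrow> 'a::comm_ring_1"
  assumes a0: "a0 < m"
  shows "det (mat m m (\<lambda>(a,b). if a = a0 then u b + t * v b else f a b)) =
         det (mat m m (\<lambda>(a,b). if a = a0 then u b else f a b)) + t * det (mat m m (\<lambda>(a,b). if a = a0 then v b else f a b))"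
proof -
  let ?P = "{p. p permutes {0..<m}}"
  let ?R = "\<lambda>p. \<Prod>a\<in>{0..<m} - {a0}. f a (p a)"
  have expand: "det (mat m m (\<lambda>(a,b). if a = a0 then w b else f a b)) = (\<Sum>p\<in>?P. signof p * (w (p a0) * ?R p))" for w
  proof -
    have "(\<Prod>a=0..<m. mat m m (\<lambda>(a,b). if a = a0 then w b else f a b) $$ (a, p a)) = w (p a0) * ?R p"
      if p: "p permutes {0..<m}" for p
    proof -
      have "(\<Prod>a=0..<m. mat m m (\<lambda>(a,b). if a = a0 then w b else f a b) $$ (a, p a))
          = (\<Prod>a=0..<m. if a = a0 then w (p a) else f a (p a))"
        using p by (intro prod.cong) (auto simp: permutes_in_image)
      also have "\<dots> = w (p a0) * ?R p"
        using a0 by (subst prod.remove[of _ a0]) (auto intro!: prod.cong)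
      finally show ?thesis .
    qed
    thus ?thesis by (simp add: det_def'[of _ m])
  qed
  show ?thesis
    by (simp only: expand) (simp add: sum.distrib sum_distrib_left algebra_simps)
qed

lemma det_mat_2:
  "det (mat 2 2 f) = f (0,0) * f (1,1) - f (0,1) * (f (1,0) :: 'a::comm_ring_1)"
proof -
  have "det (mat 2 2 f) = (\<Sum>j<2. mat 2 2 f $$ (0,j) * cofactor (mat 2 2 f) 0 j)"
    by (rule laplace_expansion_row) auto
  also have "\<dots> = f (0,0) * det (mat_delete (mat 2 2 f) 0 0) - f (0,1) * det (mat_delete (mat 2 2 f) 0 1)"
    by (simp add: numeral_2_eq_2 lessThan_Suc cofactor_def)
  also have "mat_delete (mat 2 2 f) 0 0 = mat 1 1 (\<lambda>_. f (1,1))" by (auto simp: mat_delete_def intro!: eq_matI)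
  also have "mat_delete (mat 2 2 f) 0 1 = mat 1 1 (\<lambda>_. f (1,0))" by (auto simp: mat_delete_def intro!: eq_matI)
  finally show ?thesis by (simp add: det_single)
qed

section \<open>Cauchy matrices\<close>

definition cauchy_mat :: "nat \<Rightarrow> (nat \<Rightarrow> 'a::field) \<Rightarrow> (nat \<Rightarrow> 'a) \<Rightarrow> 'a mat" where
  "cauchy_mat n a b = mat n n (\<lambda>(p,q). 1 / (a p + b q))"

lemma prod_lessThan_Suc_if:
  "(\<Prod>i<Suc k. if i < k then f i else (1::'a::comm_monoid_mult)) = (\<Prod>i<k. f i)"
  by (simp add: lessThan_Suc)

lemma det_cauchy_mat_Suc:
  fixes a b :: "nat \<Rightarrow> 'a::field"
  assumes nz: "\<And>p q. p \<le> k \<Longrightarrow> q \<le> k \<Longrightarrow> a p + b q \<noteq> 0"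
  shows "det (cauchy_mat (Suc k) a b) =
    (\<Prod>i<k. a k - a i) * (\<Prod>j<Suc k. 1 / (a k + b j)) * (\<Prod>i<k. 1 / (a i + b k)) * (\<Prod>j<k. b k - b j)
    * det (cauchy_mat k a b)"
proof -
  have inverse_diff: "1 / (x + z) - 1 / (y + z) = (y - x) * (1 / (y + z)) * (1 / (x + z))"
    if "x + z \<noteq> 0" "y + z \<noteq> 0" for x y z :: 'a
    using that by (simp add: field_simps)
  let ?C = "cauchy_mat (Suc k) a b"
  define X where "X = mat (Suc k) (Suc k) (\<lambda>(i,j). if i < k then 1 / (a i + b j) else 1)"
  have C: "?C \<in> carrier_mat (Suc k) (Suc k)" and X: "X \<in> carrier_mat (Suc k) (Suc k)"
    by (auto simp: cauchy_mat_def X_def)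
  have "det ?C = det (mat (Suc k) (Suc k) (\<lambda>(i,j). if i < k then ?C $$ (i,j) + (-1) * ?C $$ (k,j) else ?C $$ (i,j)))"
    by (rule det_add_multiples_of_row[OF C, symmetric]) simp
  also have "\<dots> = det (mat (Suc k) (Suc k) (\<lambda>(i,j).
      (if i < k then a k - a i else 1) * (1 / (a k + b j)) * X $$ (i,j)))"
    using nz inverse_diff[of "a _" "b _" "a k"]
    by (intro arg_cong[where f = det] eq_matI) (auto simp: cauchy_mat_def X_def less_Suc_eq_le)
  also have "\<dots> = (\<Prod>i<k. a k - a i) * (\<Prod>j<Suc k. 1 / (a k + b j)) * det X"
    by (subst det_scale_rows_cols) (simp add: prod_lessThan_Suc_if mat_index_eta[OF X])
  finally have row_step: "det ?C = (\<Prod>i<k. a k - a i) * (\<Prod>j<Suc k. 1 / (a k + b j)) * det X" .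
  have "det X = det (mat (Suc k) (Suc k) (\<lambda>(i,j). if j < k then X $$ (i,j) + (-1) * X $$ (i,k) else X $$ (i,j)))"
    by (rule det_add_multiples_of_col[OF X, symmetric]) simp
  also have "\<dots> = det (mat (Suc k) (Suc k) (\<lambda>(i,j).
      (if i < k then 1 / (a i + b k) else 1) * (if j < k then b k - b j else 1)
      * (if i < k then (if j < k then 1 / (a i + b j) else 1) else (if j < k then 0 else 1))))"
    using nz inverse_diff[of "b _" "a _" "b k"]
    by (intro arg_cong[where f = det] eq_matI) (auto simp: X_def less_Suc_eq_le ac_simps)
  also have "\<dots> = (\<Prod>i<k. 1 / (a i + b k)) * (\<Prod>j<k. b k - b j) * det (cauchy_mat k a b)"
    by (subst det_scale_rows_cols, subst det_mat_Suc_unit_last_row)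
      (auto simp: prod_lessThan_Suc_if cauchy_mat_def intro!: arg_cong[where f = det] eq_matI)
  finally show ?thesis using row_step by (simp add: ac_simps)
qed

lemma det_cauchy_mat_pos:
  fixes a b :: "nat \<Rightarrow> real"
  assumes "\<And>p. p < k \<Longrightarrow> 0 < a p" "\<And>q. q < k \<Longrightarrow> 0 < b q"
    and "\<And>p q. p < q \<Longrightarrow> q < k \<Longrightarrow> a p < a q" "\<And>p q. p < q \<Longrightarrow> q < k \<Longrightarrow> b p < b q"
  shows "det (cauchy_mat k a b) > 0"
  using assms
proof (induction k)
  case 0
  then show ?case by (simp add: cauchy_mat_def)
next
  case (Suc k)
  have "det (cauchy_mat k a b) > 0" by (rule Suc.IH) (use Suc.prems in auto)
  moreover have pos: "a p + b q > 0" if "p \<le> k" "q \<le> k" for p q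
    using Suc.prems(1,2) that by (simp add: add_pos_pos)
  ultimately show ?case
    using Suc.prems(3,4)
    by (subst det_cauchy_mat_Suc) (auto intro!: mult_pos_pos prod_pos divide_pos_pos dest: pos)
qed

section \<open>Minors\<close>

lemma submatrix_mat:
  assumes "I \<subseteq> {0..<n}" "J \<subseteq> {0..<n}"
  shows "submatrix (mat n n f) I J = mat (card I) (card J) (\<lambda>(p,q). f (pick I p, pick J q))"
proof -
  have rows: "{i. i < dim_row (mat n n f) \<and> i \<in> I} = I" and cols: "{j. j < dim_col (mat n n f) \<and> j \<in> J} = J"
    using assms by auto
  show ?thesis
  proof (rule eq_matI)
    fix p q assume "p < dim_row (mat (card I) (card J) (\<lambda>(p,q). f (pick I p, pick J q)))"
      "q < dim_col (mat (card I) (card J) (\<lambda>(p,q). f (pick I p, pick J q)))"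
    hence p: "p < card I" and q: "q < card J" by auto
    have "pick I p < n" "pick J q < n" using pick_in_set_le[OF p] pick_in_set_le[OF q] assms by auto
    thus "submatrix (mat n n f) I J $$ (p,q) = mat (card I) (card J) (\<lambda>(p,q). f (pick I p, pick J q)) $$ (p,q)"
      using submatrix_index[of p "mat n n f" I q J] rows cols p q by simp
  qed (use rows cols in \<open>auto simp: dim_submatrix\<close>)
qed

lemma submatrix_carrier_mat:
  assumes "M \<in> carrier_mat n n" "I \<subseteq> {0..<n}" "J \<subseteq> {0..<n}"
  shows "submatrix M I J = mat (card I) (card J) (\<lambda>(p,q). M $$ (pick I p, pick J q))"
  using submatrix_mat[OF assms(2,3), of "($$) M"] mat_index_eta[OF assms(1)] by simp

lemma minor_singleton:
  assumes "M \<in> carrier_mat n n" "p < n" "q < n"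
  shows "minor M {p} {q} = M $$ (p,q)"
proof -
  have "pick {p} 0 = p" "pick {q} 0 = q" by (auto intro: Least_equality)
  thus ?thesis
    using assms by (simp add: minor_def submatrix_carrier_mat det_single del: pick.simps)
qed

lemma minor_adjacent_2x2:
  assumes "M \<in> carrier_mat n n" "Suc r < n" "Suc s < n"
  shows "minor M {r, Suc r} {s, Suc s} = M $$ (r,s) * M $$ (Suc r, Suc s) - M $$ (r, Suc s) * M $$ (Suc r, s)"
proof -
  have pick0: "pick {i, Suc i} 0 = i" for i by (simp, rule Least_equality) auto
  have pick1: "pick {i, Suc i} (Suc 0) = Suc i" for i
    by (simp only: pick.simps(2) pick0, rule Least_equality) auto
  show ?thesis
    using assms unfolding minor_def
    by (simp add: submatrix_carrier_mat numeral_2_eq_2[symmetric] det_mat_2 del: pick.simps)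
      (simp add: numeral_2_eq_2 pick0 pick1 del: pick.simps)
qed

definition TP_mat :: "nat \<Rightarrow> real mat \<Rightarrow> bool" where
  "TP_mat n M \<longleftrightarrow> M \<in> carrier_mat n n \<and> (\<forall>I J. valid_minor n I J \<longrightarrow> minor M I J > 0)"

lemma TP_imp_TNN: "TP_mat n M \<Longrightarrow> TNN_mat n M"
  unfolding TP_mat_def TNN_mat_def by (auto intro: less_imp_le)

lemma valid_minor_singleton: "p < n \<Longrightarrow> q < n \<Longrightarrow> valid_minor n {p} {q}"
  unfolding valid_minor_def by auto

lemma TP_mat_entry_pos: "TP_mat n M \<Longrightarrow> p < n \<Longrightarrow> q < n \<Longrightarrow> M $$ (p,q) > 0"
  unfolding TP_mat_def by (metis valid_minor_singleton minor_singleton)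

lemma TNN_mat_entry_nonneg: "TNN_mat n M \<Longrightarrow> p < n \<Longrightarrow> q < n \<Longrightarrow> M $$ (p,q) \<ge> 0"
  unfolding TNN_mat_def by (metis valid_minor_singleton minor_singleton)

lemma cauchy_mat_TP:
  fixes a b :: "nat \<Rightarrow> real"
  assumes "\<And>p. p < n \<Longrightarrow> 0 < a p" "\<And>q. q < n \<Longrightarrow> 0 < b q"
    and "\<And>p q. p < q \<Longrightarrow> q < n \<Longrightarrow> a p < a q" "\<And>p q. p < q \<Longrightarrow> q < n \<Longrightarrow> b p < b q"
  shows "TP_mat n (cauchy_mat n a b)"
  unfolding TP_mat_def
proof (intro conjI allI impI)
  show "cauchy_mat n a b \<in> carrier_mat n n" by (simp add: cauchy_mat_def)
  fix I J assume "valid_minor n I J"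
  hence I: "I \<subseteq> {0..<n}" and J: "J \<subseteq> {0..<n}" and card: "card I = card J"
    unfolding valid_minor_def by auto
  have pick_I: "pick I p < n" if "p < card I" for p using pick_in_set_le[OF that] I by auto
  have pick_J: "pick J p < n" if "p < card I" for p using pick_in_set_le[of p J] that card J by auto
  have "minor (cauchy_mat n a b) I J = det (cauchy_mat (card I) (a \<circ> pick I) (b \<circ> pick J))"
    unfolding minor_def cauchy_mat_def submatrix_mat[OF I J] card by (simp add: case_prod_beta)
  also have "\<dots> > 0"
  proof (rule det_cauchy_mat_pos)
    fix p q assume "p < q" "q < card I"
    thus "(a \<circ> pick I) p < (a \<circ> pick I) q" "(b \<circ> pick J) p < (b \<circ> pick J) q"
      using assms(3,4) pick_mono_le[of q I p] pick_mono_le[of q J p] pick_I pick_J card by auto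
  qed (use assms pick_I pick_J in auto)
  finally show "minor (cauchy_mat n a b) I J > 0" .
qed

lemma TNN_transpose:
  assumes T: "TNN_mat n M"
  shows "TNN_mat n M\<^sup>T"
  unfolding TNN_mat_def
proof (intro conjI allI impI)
  have M: "M \<in> carrier_mat n n" using T by (simp add: TNN_mat_def)
  show "M\<^sup>T \<in> carrier_mat n n" using M by simp
  fix I J assume v: "valid_minor n I J"
  hence I: "I \<subseteq> {0..<n}" and J: "J \<subseteq> {0..<n}" and card: "card I = card J"
    unfolding valid_minor_def by auto
  have "J \<noteq> {}" using v card finite_subset[OF I] by (auto simp: valid_minor_def)
  hence v': "valid_minor n J I" using I J card unfolding valid_minor_def by auto
  have "M\<^sup>T = mat n n (\<lambda>(i,j). M $$ (j,i))" using M by (auto intro!: eq_matI)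
  hence "submatrix M\<^sup>T I J = (submatrix M J I)\<^sup>T"
    using M by (auto simp: submatrix_mat submatrix_carrier_mat I J intro!: eq_matI)
  hence "minor M\<^sup>T I J = minor M J I"
    unfolding minor_def using M by (simp add: submatrix_carrier_mat I J card det_transpose[of _ "card J"])
  thus "0 \<le> minor M\<^sup>T I J" using T v' unfolding TNN_mat_def by auto
qed

definition add_row_multiple :: "nat \<Rightarrow> nat \<Rightarrow> nat \<Rightarrow> 'a::comm_ring_1 \<Rightarrow> 'a mat \<Rightarrow> 'a mat" where
  "add_row_multiple n k l t M = mat n n (\<lambda>(i,j). if i = k then M $$ (k,j) + t * M $$ (l,j) else M $$ (i,j))"

lemma add_row_multiple_carrier [simp]: "add_row_multiple n k l t M \<in> carrier_mat n n"
  by (simp add: add_row_multiple_def)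

lemma add_row_multiple_index:
  "i < n \<Longrightarrow> j < n \<Longrightarrow>
    add_row_multiple n k l t M $$ (i,j) = (if i = k then M $$ (k,j) + t * M $$ (l,j) else M $$ (i,j))"
  by (simp add: add_row_multiple_def)

lemma pick_position:
  assumes "finite I" "k \<in> I"
  defines "a0 \<equiv> card {y\<in>I. y < k}"
  shows "pick I a0 = k" and "a0 < card I" and "\<And>a. a < card I \<Longrightarrow> pick I a = k \<longleftrightarrow> a = a0"
proof -
  show pick: "pick I a0 = k" unfolding a0_def by (rule pick_card_in_set[OF assms(2)])
  show a0: "a0 < card I" unfolding a0_def using assms by (intro psubset_card_mono) auto
  show "pick I a = k \<longleftrightarrow> a = a0" if "a < card I" for a
    using pick a0 that by (metis linorder_neqE_nat order.strict_implies_not_eq pick_mono_le)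
qed

lemma pick_exchange_adjacent:
  assumes fin: "finite I" and k: "k \<in> I" and l: "l \<notin> I" and adj: "l = Suc k \<or> k = Suc l"
    and a: "a < card I"
  shows "pick (insert l (I - {k})) a = (if pick I a = k then l else pick I a)"
proof -
  let ?I' = "insert l (I - {k})"
  let ?x = "pick I a"
  have xI: "?x \<in> I" using pick_in_set_le[OF a] .
  have cx: "card {y\<in>I. y < ?x} = a" using card_pick_le[OF a] .
  show ?thesis
  proof (cases "?x = k")
    case True
    have "{y\<in>?I'. y < l} = {y\<in>I. y < k}" using adj l True xI by (auto simp: less_Suc_eq)
    hence "card {y\<in>?I'. y < l} = a" using cx True by simp
    moreover have "pick ?I' (card {y\<in>?I'. y < l}) = l" by (rule pick_card_in_set) simp
    ultimately show ?thesis using True by simp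
  next
    case False
    have xl: "?x \<noteq> l" using xI l by auto
    have "card {y\<in>?I'. y < ?x} = card {y\<in>I. y < ?x}"
    proof (cases "?x < k")
      case True
      hence "{y\<in>?I'. y < ?x} = {y\<in>I. y < ?x}" using adj xl by auto
      thus ?thesis by simp
    next
      case False
      hence "k < ?x" "l < ?x" using \<open>?x \<noteq> k\<close> adj xl by auto
      hence "{y\<in>?I'. y < ?x} = insert l ({y\<in>I. y < ?x} - {k})" by auto
      moreover have "card {y\<in>I. y < ?x} > 0" using fin k \<open>k < ?x\<close> by (auto simp: card_gt_0_iff)
      ultimately show ?thesis using fin k l \<open>k < ?x\<close> by (simp add: card_Suc_Diff1)
    qed
    hence "card {y\<in>?I'. y < ?x} = a" using cx by simp
    moreover have "pick ?I' (card {y\<in>?I'. y < ?x}) = ?x" by (rule pick_card_in_set) (use xI False in auto)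
    ultimately show ?thesis using False by simp
  qed
qed

text \<open>If row l is not among the rows of the minor, multilinearity in row k splits off t times the
  minor with row k exchanged for l; the rows keep their relative order because k and l are adjacent.\<close>

lemma minor_add_row_multiple_exchange:
  assumes M: "M \<in> carrier_mat n n" and v: "valid_minor n I J" and k: "k \<in> I" and l: "l < n" "l \<notin> I"
    and adj: "l = Suc k \<or> k = Suc l"
  shows "minor (add_row_multiple n k l t M) I J = minor M I J + t * minor M (insert l (I - {k})) J"
    and "valid_minor n (insert l (I - {k})) J"
proof -
  from v have I: "I \<subseteq> {0..<n}" and J: "J \<subseteq> {0..<n}" and card: "card I = card J"
    unfolding valid_minor_def by auto
  have fin: "finite I" using I finite_subset by blast
  let ?I' = "insert l (I - {k})" and ?m = "card I"
  obtain a0 where pick_a0: "pick I a0 = k" and a0: "a0 < ?m" and at_a0: "\<And>a. a < ?m \<Longrightarrow> pick I a = k \<longleftrightarrow> a = a0"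
    using pick_position[OF fin k] by blast
  have card': "card ?I' = ?m" using fin k l(2) by (metis DiffD1 card_Suc_Diff1 card_insert_disjoint finite_Diff)
  show v': "valid_minor n ?I' J" using v l card' unfolding valid_minor_def by auto
  have I': "?I' \<subseteq> {0..<n}" using I l by auto
  have pick': "pick ?I' a = (if a = a0 then l else pick I a)" if "a < ?m" for a
    using pick_exchange_adjacent[OF fin k l(2) adj that] at_a0[OF that] by simp
  have pick_lt: "pick I a < n" "pick J a < n" if "a < ?m" for a
    using pick_in_set_le[OF that] pick_in_set_le[of a J] that I J card by auto
  let ?f = "\<lambda>a b. M $$ (pick I a, pick J b)"
  have "submatrix (add_row_multiple n k l t M) I J
      = mat ?m ?m (\<lambda>(a,b). if a = a0 then M $$ (k, pick J b) + t * M $$ (l, pick J b) else ?f a b)"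
    using pick_lt at_a0 pick_a0
    by (auto simp: submatrix_carrier_mat submatrix_carrier_mat[OF add_row_multiple_carrier] I J card
        add_row_multiple_index intro!: eq_matI)
  moreover have "submatrix M I J = mat ?m ?m (\<lambda>(a,b). if a = a0 then M $$ (k, pick J b) else ?f a b)"
    using M pick_a0 by (auto simp: submatrix_carrier_mat I J card intro!: eq_matI)
  moreover have "submatrix M ?I' J = mat ?m ?m (\<lambda>(a,b). if a = a0 then M $$ (l, pick J b) else ?f a b)"
    using pick' by (auto simp: submatrix_carrier_mat[OF M I' J] card' card intro!: eq_matI)
  ultimately show "minor (add_row_multiple n k l t M) I J = minor M I J + t * minor M ?I' J"
    unfolding minor_def by (simp add: det_row_linear[OF a0])
qed

lemma minor_add_row_multiple_cases:
  assumes M: "M \<in> carrier_mat n n" and v: "valid_minor n I J" and k: "k < n" and l: "l < n"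
    and adj: "l = Suc k \<or> k = Suc l"
  obtains "minor (add_row_multiple n k l t M) I J = minor M I J"
    | I' where "valid_minor n I' J" "minor (add_row_multiple n k l t M) I J = minor M I J + t * minor M I' J"
proof -
  from v have I: "I \<subseteq> {0..<n}" and J: "J \<subseteq> {0..<n}" and card: "card I = card J"
    unfolding valid_minor_def by auto
  have fin: "finite I" using I finite_subset by blast
  have pick_lt: "pick I a < n" "pick J a < n" if "a < card I" for a
    using pick_in_set_le[OF that] pick_in_set_le[of a J] that I J card by auto
  consider "k \<notin> I" | "k \<in> I" "l \<in> I" | "k \<in> I" "l \<notin> I" by blast
  thus thesis
  proof cases
    case 1
    hence "pick I a \<noteq> k" if "a < card I" for a using pick_in_set_le[OF that] by auto
    hence "submatrix (add_row_multiple n k l t M) I J = submatrix M I J"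
      using pick_lt M
      by (auto simp: submatrix_carrier_mat submatrix_carrier_mat[OF add_row_multiple_carrier] I J card
          add_row_multiple_index intro!: eq_matI)
    thus thesis using that(1) unfolding minor_def by simp
  next
    case 2
    obtain a0 where pick_a0: "pick I a0 = k" and at_a0: "\<And>a. a < card I \<Longrightarrow> pick I a = k \<longleftrightarrow> a = a0"
      using pick_position[OF fin 2(1)] by blast
    obtain a1 where pick_a1: "pick I a1 = l" and a1: "a1 < card I"
      using pick_position[OF fin 2(2)] by blast
    have "a1 \<noteq> a0" using pick_a0 pick_a1 adj by auto
    moreover have "submatrix (add_row_multiple n k l t M) I J = addrow t a0 a1 (submatrix M I J)"
      using pick_lt at_a0 pick_a0 pick_a1 a1 M
      by (auto simp: submatrix_carrier_mat submatrix_carrier_mat[OF add_row_multiple_carrier] I J card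
          add_row_multiple_index mat_addrow_def intro!: eq_matI)
    ultimately have "minor (add_row_multiple n k l t M) I J = minor M I J"
      unfolding minor_def using a1 M by (simp add: det_addrow submatrix_carrier_mat I J card)
    thus thesis by (rule that(1))
  next
    case 3
    thus thesis using minor_add_row_multiple_exchange[OF M v 3(1) l 3(2) adj] that(2) by blast
  qed
qed

lemma TNN_add_row_multiple:
  assumes T: "TNN_mat n M" and t: "0 \<le> t" and k: "k < n" and l: "l < n" and adj: "l = Suc k \<or> k = Suc l"
  shows "TNN_mat n (add_row_multiple n k l t M)"
  unfolding TNN_mat_def
proof (intro conjI allI impI)
  fix I J assume v: "valid_minor n I J"
  have M: "M \<in> carrier_mat n n" using T by (simp add: TNN_mat_def)
  show "0 \<le> minor (add_row_multiple n k l t M) I J"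
    by (rule minor_add_row_multiple_cases[OF M v k l adj, of t])
      (use T v t in \<open>auto simp: TNN_mat_def\<close>)
qed simp

lemma add_row_multiple_entry_mono:
  assumes "TNN_mat n M" "0 \<le> t" "l < n" "i < n" "j < n"
  shows "M $$ (i,j) \<le> add_row_multiple n k l t M $$ (i,j)"
  using assms TNN_mat_entry_nonneg[OF assms(1), of l j] by (simp add: add_row_multiple_index)

lemma add_row_multiple_entry_pos:
  assumes "TNN_mat n M" "0 < t" "k < n" "l < n" "j < n" "M $$ (l,j) > 0"
  shows "add_row_multiple n k l t M $$ (k,j) > 0"
  using assms TNN_mat_entry_nonneg[OF assms(1), of k j] by (simp add: add_row_multiple_index add_nonneg_pos)

section \<open>Approximating a totally nonnegative matrix by positive ones\<close>

definition add_row_multiples :: "nat \<Rightarrow> 'a::comm_ring_1 \<Rightarrow> (nat \<times> nat) list \<Rightarrow> 'a mat \<Rightarrow> 'a mat" where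
  "add_row_multiples n t ps = fold (\<lambda>(k,l). add_row_multiple n k l t) ps"

definition adjacent_pairs :: "nat \<Rightarrow> (nat \<times> nat) list \<Rightarrow> bool" where
  "adjacent_pairs n ps \<longleftrightarrow> (\<forall>(k,l)\<in>set ps. k < n \<and> l < n \<and> (l = Suc k \<or> k = Suc l))"

lemma add_row_multiples_simps [simp]:
  "add_row_multiples n t [] M = M"
  "add_row_multiples n t ((k,l) # ps) M = add_row_multiples n t ps (add_row_multiple n k l t M)"
  "add_row_multiples n t (ps @ qs) M = add_row_multiples n t qs (add_row_multiples n t ps M)"
  by (simp_all add: add_row_multiples_def)

lemma add_row_multiples_carrier: "M \<in> carrier_mat n n \<Longrightarrow> add_row_multiples n t ps M \<in> carrier_mat n n"
proof (induction ps arbitrary: M)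
  case (Cons kl ps)
  thus ?case by (cases kl) simp
qed simp

lemma TNN_add_row_multiples:
  "TNN_mat n M \<Longrightarrow> 0 \<le> t \<Longrightarrow> adjacent_pairs n ps \<Longrightarrow> TNN_mat n (add_row_multiples n t ps M)"
proof (induction ps arbitrary: M)
  case (Cons kl ps)
  obtain k l where kl: "kl = (k,l)" by fastforce
  hence "TNN_mat n (add_row_multiple n k l t M)"
    using Cons.prems by (intro TNN_add_row_multiple) (auto simp: adjacent_pairs_def)
  with Cons kl show ?case by (simp add: adjacent_pairs_def)
qed simp

lemma add_row_multiples_entry_mono:
  "TNN_mat n M \<Longrightarrow> 0 \<le> t \<Longrightarrow> adjacent_pairs n ps \<Longrightarrow> i < n \<Longrightarrow> j < n \<Longrightarrow>
    M $$ (i,j) \<le> add_row_multiples n t ps M $$ (i,j)"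
proof (induction ps arbitrary: M)
  case (Cons kl ps)
  obtain k l where kl: "kl = (k,l)" by fastforce
  have kl_adj: "k < n" "l < n" "l = Suc k \<or> k = Suc l" and adj: "adjacent_pairs n ps"
    using Cons.prems(3) kl by (auto simp: adjacent_pairs_def)
  have "M $$ (i,j) \<le> add_row_multiple n k l t M $$ (i,j)"
    using add_row_multiple_entry_mono Cons.prems kl_adj by blast
  also have "\<dots> \<le> add_row_multiples n t ps (add_row_multiple n k l t M) $$ (i,j)"
    using Cons.IH[OF TNN_add_row_multiple[OF Cons.prems(1,2) kl_adj] Cons.prems(2) adj Cons.prems(4,5)] .
  finally show ?case using kl by simp
qed simp

definition down_pairs :: "nat \<Rightarrow> (nat \<times> nat) list" where
  "down_pairs m = map (\<lambda>k. (Suc k, k)) [0..<m]"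

definition up_pairs :: "nat \<Rightarrow> nat \<Rightarrow> (nat \<times> nat) list" where
  "up_pairs m n = map (\<lambda>k. (k, Suc k)) (rev [m..<n - 1])"

lemma adjacent_pairs_down: "m < n \<Longrightarrow> adjacent_pairs n (down_pairs m)"
  by (auto simp: adjacent_pairs_def down_pairs_def)

lemma adjacent_pairs_up: "adjacent_pairs n (up_pairs m n)"
  by (auto simp: adjacent_pairs_def up_pairs_def)

lemma down_pairs_entry_pos:
  assumes T: "TNN_mat n M" and t: "0 < t" and a: "a \<le> m" and m: "m < n" and b: "b < n"
    and pos: "M $$ (a,b) > 0"
  shows "\<forall>p. a \<le> p \<and> p \<le> m \<longrightarrow> add_row_multiples n t (down_pairs m) M $$ (p,b) > 0"
  using a m
proof (induction m rule: dec_induct)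
  case base
  thus ?case
    using add_row_multiples_entry_mono[OF T _ adjacent_pairs_down, of t a a b] pos t b by fastforce
next
  case (step m)
  let ?N = "add_row_multiples n t (down_pairs m) M"
  have TN: "TNN_mat n ?N" using TNN_add_row_multiples[OF T _ adjacent_pairs_down] t step.prems by simp
  have split: "add_row_multiples n t (down_pairs (Suc m)) M = add_row_multiple n (Suc m) m t ?N"
    by (simp add: down_pairs_def)
  show ?case
    unfolding split
  proof (intro allI impI)
    fix p assume p: "a \<le> p \<and> p \<le> Suc m"
    show "add_row_multiple n (Suc m) m t ?N $$ (p,b) > 0"
    proof (cases "p = Suc m")
      case True
      thus ?thesis using add_row_multiple_entry_pos[OF TN t] step b by auto
    next
      case False
      hence "?N $$ (p,b) > 0" using step.IH step.prems p by auto
      moreover have "?N $$ (p,b) \<le> add_row_multiple n (Suc m) m t ?N $$ (p,b)"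
        by (rule add_row_multiple_entry_mono[OF TN]) (use t p b step.prems in auto)
      ultimately show ?thesis by linarith
    qed
  qed
qed

lemma up_pairs_entry_pos:
  assumes T: "TNN_mat n M" and t: "0 < t" and m: "m \<le> n - 1" and b: "b < n"
    and pos: "M $$ (n - 1, b) > 0"
  shows "\<forall>p. m \<le> p \<and> p < n \<longrightarrow> add_row_multiples n t (up_pairs m n) M $$ (p,b) > 0"
  using m
proof (induction m rule: inc_induct)
  case base
  have "p = n - 1" if "n - 1 \<le> p" "p < n" for p using that by linarith
  thus ?case using pos by (auto simp: up_pairs_def)
next
  case (step m)
  let ?N = "add_row_multiples n t (up_pairs (Suc m) n) M"
  have TN: "TNN_mat n ?N" using TNN_add_row_multiples[OF T _ adjacent_pairs_up] t by simp
  have split: "add_row_multiples n t (up_pairs m n) M = add_row_multiple n m (Suc m) t ?N"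
    using step.hyps by (simp add: up_pairs_def upt_conv_Cons)
  show ?case
    unfolding split
  proof (intro allI impI)
    fix p assume p: "m \<le> p \<and> p < n"
    show "add_row_multiple n m (Suc m) t ?N $$ (p,b) > 0"
    proof (cases "p = m")
      case True
      thus ?thesis using add_row_multiple_entry_pos[OF TN t] step b by auto
    next
      case False
      hence "?N $$ (p,b) > 0" using step.IH p by auto
      moreover have "?N $$ (p,b) \<le> add_row_multiple n m (Suc m) t ?N $$ (p,b)"
        by (rule add_row_multiple_entry_mono[OF TN]) (use t p b step.hyps in auto)
      ultimately show ?thesis by linarith
    qed
  qed
qed

definition row_sweep :: "nat \<Rightarrow> 'a::comm_ring_1 \<Rightarrow> 'a mat \<Rightarrow> 'a mat" where
  "row_sweep n t M = add_row_multiples n t (down_pairs (n - 1) @ up_pairs 0 n) M"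

definition smoothing :: "nat \<Rightarrow> 'a::comm_ring_1 \<Rightarrow> 'a mat \<Rightarrow> 'a mat" where
  "smoothing n t M = (row_sweep n t (row_sweep n t M)\<^sup>T)\<^sup>T"

lemma row_sweep_carrier: "M \<in> carrier_mat n n \<Longrightarrow> row_sweep n t M \<in> carrier_mat n n"
  unfolding row_sweep_def by (rule add_row_multiples_carrier)

lemma adjacent_pairs_row_sweep: "adjacent_pairs n (down_pairs (n - 1) @ up_pairs 0 n)"
  by (auto simp: adjacent_pairs_def down_pairs_def up_pairs_def)

lemma TNN_row_sweep: "TNN_mat n M \<Longrightarrow> 0 \<le> t \<Longrightarrow> TNN_mat n (row_sweep n t M)"
  unfolding row_sweep_def by (rule TNN_add_row_multiples[OF _ _ adjacent_pairs_row_sweep])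

lemma TNN_smoothing: "TNN_mat n M \<Longrightarrow> 0 \<le> t \<Longrightarrow> TNN_mat n (smoothing n t M)"
  unfolding smoothing_def by (intro TNN_transpose TNN_row_sweep)

lemma row_sweep_column_pos:
  assumes T: "TNN_mat n M" and t: "0 < t" and a: "a < n" and b: "b < n" and pos: "M $$ (a,b) > 0"
  shows "\<forall>p<n. row_sweep n t M $$ (p,b) > 0"
proof -
  let ?D = "add_row_multiples n t (down_pairs (n - 1)) M"
  have "?D $$ (n - 1, b) > 0" using down_pairs_entry_pos[OF T t _ _ b pos, of "n - 1"] a by auto
  moreover have "TNN_mat n ?D" using TNN_add_row_multiples[OF T _ adjacent_pairs_down] t a by simp
  ultimately show ?thesis
    using up_pairs_entry_pos[OF _ t _ b, of ?D 0] unfolding row_sweep_def by simp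
qed

lemma smoothing_pos:
  assumes T: "TNN_mat n M" and t: "0 < t" and a: "a < n" and b: "b < n" and pos: "M $$ (a,b) > 0"
    and p: "p < n" and q: "q < n"
  shows "smoothing n t M $$ (p,q) > 0"
proof -
  let ?R = "row_sweep n t M"
  have TR: "TNN_mat n ?R" using TNN_row_sweep[OF T] t by simp
  hence R: "?R \<in> carrier_mat n n" by (simp add: TNN_mat_def)
  have "?R\<^sup>T $$ (b,p) > 0" using row_sweep_column_pos[OF T t a b pos] p b R by auto
  hence "row_sweep n t ?R\<^sup>T $$ (q,p) > 0" using row_sweep_column_pos[OF TNN_transpose[OF TR] t b p] q by auto
  moreover have "row_sweep n t ?R\<^sup>T \<in> carrier_mat n n" using R by (simp add: row_sweep_carrier)
  ultimately show ?thesis unfolding smoothing_def using p q by auto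
qed

definition entrywise_tendsto :: "nat \<Rightarrow> ('b \<Rightarrow> real mat) \<Rightarrow> real mat \<Rightarrow> 'b filter \<Rightarrow> bool" where
  "entrywise_tendsto n f L F \<longleftrightarrow> (\<forall>i<n. \<forall>j<n. ((\<lambda>x. f x $$ (i,j)) \<longlongrightarrow> L $$ (i,j)) F)"

lemma entrywise_tendsto_add_row_multiples:
  assumes "entrywise_tendsto n f L (at_right 0)" "adjacent_pairs n ps"
  shows "entrywise_tendsto n (\<lambda>t. add_row_multiples n t ps (f t)) L (at_right 0)"
  using assms
proof (induction ps arbitrary: f)
  case (Cons kl ps)
  obtain k l where kl: "kl = (k,l)" by fastforce
  have l: "l < n" using Cons.prems(2) kl by (auto simp: adjacent_pairs_def)
  have "entrywise_tendsto n (\<lambda>t. add_row_multiple n k l t (f t)) L (at_right 0)"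
    unfolding entrywise_tendsto_def
  proof (intro allI impI)
    fix i j assume i: "i < n" and j: "j < n"
    show "((\<lambda>t. add_row_multiple n k l t (f t) $$ (i,j)) \<longlongrightarrow> L $$ (i,j)) (at_right 0)"
    proof (cases "i = k")
      case True
      have "((\<lambda>t. f t $$ (k,j) + t * f t $$ (l,j)) \<longlongrightarrow> L $$ (k,j) + 0 * L $$ (l,j)) (at_right 0)"
        using Cons.prems(1) True i l j unfolding entrywise_tendsto_def by (intro tendsto_intros) auto
      thus ?thesis using True i j by (simp add: add_row_multiple_index)
    next
      case False
      thus ?thesis using Cons.prems(1) i j unfolding entrywise_tendsto_def by (simp add: add_row_multiple_index)
    qed
  qed
  thus ?case using Cons.IH Cons.prems(2) kl by (simp add: adjacent_pairs_def)
qed simp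

lemma entrywise_tendsto_transpose:
  assumes "entrywise_tendsto n f L F" "\<And>x. f x \<in> carrier_mat n n" "L \<in> carrier_mat n n"
  shows "entrywise_tendsto n (\<lambda>x. (f x)\<^sup>T) L\<^sup>T F"
  unfolding entrywise_tendsto_def
proof (intro allI impI)
  fix i j assume "i < n" "j < n"
  moreover have "(\<lambda>x. (f x)\<^sup>T $$ (i,j)) = (\<lambda>x. f x $$ (j,i))"
  proof
    fix x show "(f x)\<^sup>T $$ (i,j) = f x $$ (j,i)" using assms(2)[of x] \<open>i < n\<close> \<open>j < n\<close> by auto
  qed
  ultimately show "((\<lambda>x. (f x)\<^sup>T $$ (i,j)) \<longlongrightarrow> L\<^sup>T $$ (i,j)) F"
    using assms(1,3) unfolding entrywise_tendsto_def by auto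
qed

lemma entrywise_tendsto_smoothing:
  assumes M: "M \<in> carrier_mat n n"
  shows "entrywise_tendsto n (\<lambda>t. smoothing n t M) M (at_right 0)"
proof -
  have sweep: "entrywise_tendsto n (\<lambda>t. row_sweep n t (f t)) L (at_right 0)"
    if "entrywise_tendsto n f L (at_right 0)" for f L
    unfolding row_sweep_def
    by (rule entrywise_tendsto_add_row_multiples[OF that adjacent_pairs_row_sweep])
  have "entrywise_tendsto n (\<lambda>t. M) M (at_right 0)" by (simp add: entrywise_tendsto_def)
  from sweep[OF this] have "entrywise_tendsto n (\<lambda>t. (row_sweep n t M)\<^sup>T) M\<^sup>T (at_right 0)"
    using M by (intro entrywise_tendsto_transpose) (auto simp: row_sweep_carrier)
  from sweep[OF this] have "entrywise_tendsto n (\<lambda>t. smoothing n t M) M\<^sup>T\<^sup>T (at_right 0)"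
    unfolding smoothing_def using M by (intro entrywise_tendsto_transpose) (auto simp: row_sweep_carrier)
  thus ?thesis by simp
qed

section \<open>Laurent monomials\<close>

definition laurent_monomial :: "nat \<Rightarrow> (nat \<Rightarrow> nat \<Rightarrow> int) \<Rightarrow> real mat \<Rightarrow> real" where
  "laurent_monomial n E M = (\<Prod>i<n. \<Prod>j<n. M $$ (i,j) powi E i j)"

definition nonzero_entries :: "nat \<Rightarrow> real mat \<Rightarrow> bool" where
  "nonzero_entries n M \<longleftrightarrow> (\<forall>i<n. \<forall>j<n. M $$ (i,j) \<noteq> 0)"

lemma mono_eval_laurent_monomial: "mono_eval n A M = laurent_monomial n (\<lambda>i j. A $$ (i,j)) M"
  unfolding mono_eval_def laurent_monomial_def ..

lemma laurent_monomial_cong: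
  "(\<And>i j. i < n \<Longrightarrow> j < n \<Longrightarrow> E i j = E' i j) \<Longrightarrow> laurent_monomial n E M = laurent_monomial n E' M"
  unfolding laurent_monomial_def by (intro prod.cong refl) auto

lemma laurent_monomial_add:
  "nonzero_entries n M \<Longrightarrow>
    laurent_monomial n (\<lambda>i j. E i j + E' i j) M = laurent_monomial n E M * laurent_monomial n E' M"
  unfolding laurent_monomial_def nonzero_entries_def by (simp add: power_int_add prod.distrib)

lemma laurent_monomial_sum:
  assumes "finite X" "nonzero_entries n M"
  shows "laurent_monomial n (\<lambda>i j. \<Sum>x\<in>X. E x i j) M = (\<Prod>x\<in>X. laurent_monomial n (E x) M)"
  using assms(1)
proof (induction X rule: finite_induct)
  case empty
  then show ?case by (simp add: laurent_monomial_def)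
next
  case (insert x X)
  thus ?case by (simp add: laurent_monomial_add[OF assms(2)])
qed

lemma prod_power_int_distrib:
  "finite X \<Longrightarrow> (\<Prod>x\<in>X. f x) powi c = (\<Prod>x\<in>X. (f x :: 'a::field) powi c)"
  by (induction X rule: finite_induct) (auto simp: power_int_mult_distrib)

lemma laurent_monomial_scale: "laurent_monomial n (\<lambda>i j. c * E i j) M = laurent_monomial n E M powi c"
  unfolding laurent_monomial_def
  by (simp add: power_int_mult[symmetric] mult.commute[of c] prod_power_int_distrib)

lemma laurent_monomial_single:
  assumes "p < n" "q < n"
  shows "laurent_monomial n (\<lambda>i j. if i = p \<and> j = q then e else 0) M = M $$ (p,q) powi e"
proof -
  have "(\<Prod>j<n. M $$ (i,j) powi (if i = p \<and> j = q then e else 0)) = (if i = p then M $$ (p,q) powi e else 1)"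
    for i using assms by (cases "i = p") (simp_all add: if_distrib[of "power_int _"] prod.delta cong: if_cong)
  thus ?thesis unfolding laurent_monomial_def using assms by (simp add: prod.delta)
qed

lemma laurent_monomial_pos:
  "(\<And>i j. i < n \<Longrightarrow> j < n \<Longrightarrow> M $$ (i,j) > 0) \<Longrightarrow> laurent_monomial n E M > 0"
  unfolding laurent_monomial_def by (intro prod_pos) auto

lemma tendsto_laurent_monomial:
  assumes "entrywise_tendsto n f L F" and "\<And>i j. i < n \<Longrightarrow> j < n \<Longrightarrow> L $$ (i,j) \<noteq> 0 \<or> 0 \<le> E i j"
  shows "((\<lambda>x. laurent_monomial n E (f x)) \<longlongrightarrow> laurent_monomial n E L) F"
  unfolding laurent_monomial_def
proof (intro tendsto_prod)
  fix i j assume "i \<in> {..<n}" "j \<in> {..<n}"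
  hence lim: "((\<lambda>x. f x $$ (i,j)) \<longlongrightarrow> L $$ (i,j)) F" and "L $$ (i,j) \<noteq> 0 \<or> 0 \<le> E i j"
    using assms unfolding entrywise_tendsto_def by auto
  thus "((\<lambda>x. f x $$ (i,j) powi E i j) \<longlongrightarrow> L $$ (i,j) powi E i j) F"
  proof (cases "L $$ (i,j) = 0")
    case True
    hence "0 \<le> E i j" using \<open>L $$ (i,j) \<noteq> 0 \<or> 0 \<le> E i j\<close> by simp
    moreover have "((\<lambda>x. f x $$ (i,j) ^ nat (E i j)) \<longlongrightarrow> L $$ (i,j) ^ nat (E i j)) F"
      using lim by (intro tendsto_intros)
    ultimately show ?thesis by (simp add: power_int_def)
  qed (intro tendsto_power_int lim)
qed

section \<open>The monomial of one ASM in terms of another\<close>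

definition rect_sum :: "int mat \<Rightarrow> nat \<Rightarrow> nat \<Rightarrow> int" where
  "rect_sum A u v = (\<Sum>p<u. \<Sum>q<v. A $$ (p,q))"

lemma corner_sum_rect_sum: "corner_sum A i j = rect_sum A (Suc i) (Suc j)"
  unfolding corner_sum_def rect_sum_def by (simp add: lessThan_Suc_atMost)

lemma entry_rect_sum:
  "A $$ (p,q) = rect_sum A (Suc p) (Suc q) - rect_sum A p (Suc q) - rect_sum A (Suc p) q + rect_sum A p q"
  unfolding rect_sum_def by (simp add: sum.distrib)

lemma rect_sum_zero [simp]: "rect_sum A 0 v = 0" "rect_sum A u 0 = 0"
  unfolding rect_sum_def by auto

lemma ASM_rect_sum_all_rows: "is_ASM n A \<Longrightarrow> v \<le> n \<Longrightarrow> rect_sum A n v = int v"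
  unfolding rect_sum_def is_ASM_def by (subst sum.swap) simp

lemma ASM_rect_sum_all_cols: "is_ASM n A \<Longrightarrow> u \<le> n \<Longrightarrow> rect_sum A u n = int u"
  unfolding rect_sum_def is_ASM_def by simp

definition adjacent_exponent :: "nat \<Rightarrow> nat \<Rightarrow> nat \<Rightarrow> nat \<Rightarrow> int" where
  "adjacent_exponent r s p q = of_bool (p = r \<and> q = Suc s) + of_bool (p = Suc r \<and> q = s)
     - of_bool (p = r \<and> q = s) - of_bool (p = Suc r \<and> q = Suc s)"

lemma sum_grid_single:
  fixes d :: "nat \<Rightarrow> nat \<Rightarrow> int"
  assumes boundary: "\<And>v. d 0 v = 0" "\<And>u. d u 0 = 0"
    "\<And>v. v \<le> n \<Longrightarrow> d n v = 0" "\<And>u. u \<le> n \<Longrightarrow> d u n = 0"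
    and u: "u \<le> n" and v: "v \<le> n"
  shows "(\<Sum>r<n - 1. \<Sum>s<n - 1. d (Suc r) (Suc s) * of_bool (Suc r = u \<and> Suc s = v)) = d u v"
proof (cases "0 < u \<and> u < n \<and> 0 < v \<and> v < n")
  case True
  have "(\<Sum>s<n - 1. d (Suc r) (Suc s) * of_bool (Suc r = u \<and> Suc s = v)) = (if r = u - 1 then d u v else 0)" for r
  proof (cases "r = u - 1")
    case r: True
    have "(\<Sum>s<n - 1. d (Suc r) (Suc s) * of_bool (Suc r = u \<and> Suc s = v)) = (\<Sum>s<n - 1. if s = v - 1 then d u v else 0)"
      using True r by (intro sum.cong refl) auto
    also have "\<dots> = d u v" using True by (simp only: sum.delta finite_lessThan lessThan_iff) auto
    finally show ?thesis using r by simp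
  qed (use True in auto)
  hence "(\<Sum>r<n - 1. \<Sum>s<n - 1. d (Suc r) (Suc s) * of_bool (Suc r = u \<and> Suc s = v))
      = (\<Sum>r<n - 1. if r = u - 1 then d u v else 0)" by simp
  also have "\<dots> = d u v" using True by (simp only: sum.delta finite_lessThan lessThan_iff) auto
  finally show ?thesis .
next
  case False
  hence "d u v = 0" using boundary u v by (auto simp: not_less le_antisym)
  moreover have "of_bool (Suc r = u \<and> Suc s = v) = (0::int)" if "r < n - 1" "s < n - 1" for r s
    using False that by auto
  ultimately show ?thesis by simp
qed

lemma sum_adjacent_exponent:
  fixes d :: "nat \<Rightarrow> nat \<Rightarrow> int"
  assumes boundary: "\<And>v. d 0 v = 0" "\<And>u. d u 0 = 0"
    "\<And>v. v \<le> n \<Longrightarrow> d n v = 0" "\<And>u. u \<le> n \<Longrightarrow> d u n = 0"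
    and p: "p < n" and q: "q < n"
  shows "(\<Sum>r<n - 1. \<Sum>s<n - 1. d (Suc r) (Suc s) * adjacent_exponent r s p q)
    = d (Suc p) q + d p (Suc q) - d (Suc p) (Suc q) - d p q"
proof -
  let ?S = "\<lambda>u v. \<Sum>r<n - 1. \<Sum>s<n - 1. d (Suc r) (Suc s) * of_bool (Suc r = u \<and> Suc s = v)"
  have "d (Suc r) (Suc s) * adjacent_exponent r s p q
      = d (Suc r) (Suc s) * of_bool (Suc r = Suc p \<and> Suc s = q) + d (Suc r) (Suc s) * of_bool (Suc r = p \<and> Suc s = Suc q)
      - d (Suc r) (Suc s) * of_bool (Suc r = Suc p \<and> Suc s = Suc q) - d (Suc r) (Suc s) * of_bool (Suc r = p \<and> Suc s = q)"
    for r s by (auto simp: adjacent_exponent_def algebra_simps)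
  hence "(\<Sum>r<n - 1. \<Sum>s<n - 1. d (Suc r) (Suc s) * adjacent_exponent r s p q)
      = ?S (Suc p) q + ?S p (Suc q) - ?S (Suc p) (Suc q) - ?S p q"
    by (simp only: sum.distrib sum_subtractf)
  moreover have "Suc p \<le> n" "p \<le> n" "Suc q \<le> n" "q \<le> n" using p q by auto
  ultimately show ?thesis by (simp only: sum_grid_single[OF boundary])
qed

lemma ASM_exponent_decomposition:
  assumes A: "is_ASM n A" and B: "is_ASM n B" and p: "p < n" and q: "q < n"
  shows "B $$ (p,q) = A $$ (p,q) + (\<Sum>r<n - 1. \<Sum>s<n - 1. (corner_sum A r s - corner_sum B r s) * adjacent_exponent r s p q)"
proof -
  define d where "d u v = rect_sum A u v - rect_sum B u v" for u v
  have "(\<Sum>r<n - 1. \<Sum>s<n - 1. (corner_sum A r s - corner_sum B r s) * adjacent_exponent r s p q)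
      = d (Suc p) q + d p (Suc q) - d (Suc p) (Suc q) - d p q"
    unfolding corner_sum_rect_sum d_def[symmetric]
    by (rule sum_adjacent_exponent[OF _ _ _ _ p q])
      (simp_all add: d_def ASM_rect_sum_all_rows[OF A] ASM_rect_sum_all_rows[OF B]
        ASM_rect_sum_all_cols[OF A] ASM_rect_sum_all_cols[OF B])
  thus ?thesis using entry_rect_sum[of A p q] entry_rect_sum[of B p q] by (simp add: d_def)
qed

definition adjacent_ratio :: "real mat \<Rightarrow> nat \<Rightarrow> nat \<Rightarrow> real" where
  "adjacent_ratio M r s = M $$ (r, Suc s) * M $$ (Suc r, s) / (M $$ (r,s) * M $$ (Suc r, Suc s))"

lemma laurent_monomial_adjacent_exponent:
  assumes nz: "nonzero_entries n M" and r: "Suc r < n" and s: "Suc s < n"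
  shows "laurent_monomial n (adjacent_exponent r s) M = adjacent_ratio M r s"
proof -
  let ?e = "\<lambda>p q e i j. if i = p \<and> j = q then e else (0::int)"
  have "laurent_monomial n (adjacent_exponent r s) M
      = laurent_monomial n (\<lambda>i j. ?e r (Suc s) 1 i j + ?e (Suc r) s 1 i j + ?e r s (-1) i j + ?e (Suc r) (Suc s) (-1) i j) M"
    by (rule laurent_monomial_cong) (auto simp: adjacent_exponent_def)
  also have "\<dots> = adjacent_ratio M r s"
    using r s by (simp add: laurent_monomial_add[OF nz] laurent_monomial_single adjacent_ratio_def
        power_int_minus1_right field_simps)
  finally show ?thesis .
qed

lemma mono_eval_ASM_adjacent_ratios:
  assumes A: "is_ASM n A" and B: "is_ASM n B" and nz: "nonzero_entries n M"
  shows "mono_eval n B M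
    = mono_eval n A M * (\<Prod>r<n - 1. \<Prod>s<n - 1. adjacent_ratio M r s powi (corner_sum A r s - corner_sum B r s))"
proof -
  let ?c = "\<lambda>r s. corner_sum A r s - corner_sum B r s"
  have "mono_eval n B M
      = laurent_monomial n (\<lambda>p q. A $$ (p,q) + (\<Sum>r<n - 1. \<Sum>s<n - 1. ?c r s * adjacent_exponent r s p q)) M"
    unfolding mono_eval_laurent_monomial
    by (rule laurent_monomial_cong) (use ASM_exponent_decomposition[OF A B] in auto)
  also have "\<dots> = mono_eval n A M * (\<Prod>r<n - 1. \<Prod>s<n - 1. laurent_monomial n (\<lambda>p q. ?c r s * adjacent_exponent r s p q) M)"
    by (simp add: mono_eval_laurent_monomial laurent_monomial_add[OF nz] laurent_monomial_sum[OF _ nz])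
  also have "\<dots> = mono_eval n A M * (\<Prod>r<n - 1. \<Prod>s<n - 1. adjacent_ratio M r s powi ?c r s)"
    by (intro arg_cong2[where f = "(*)"] prod.cong refl)
      (auto simp: laurent_monomial_scale laurent_monomial_adjacent_exponent[OF nz])
  finally show ?thesis .
qed

section \<open>The ASM order implies total nonnegativity\<close>

lemma adjacent_ratio_le_one:
  assumes T: "TNN_mat n M" and pos: "\<And>i j. i < n \<Longrightarrow> j < n \<Longrightarrow> M $$ (i,j) > 0"
    and r: "Suc r < n" and s: "Suc s < n"
  shows "0 \<le> adjacent_ratio M r s" "adjacent_ratio M r s \<le> 1"
proof -
  have M: "M \<in> carrier_mat n n" using T by (simp add: TNN_mat_def)
  have "minor M {r, Suc r} {s, Suc s} \<ge> 0"
    using T r s unfolding TNN_mat_def valid_minor_def by auto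
  hence "M $$ (r, Suc s) * M $$ (Suc r, s) \<le> M $$ (r,s) * M $$ (Suc r, Suc s)"
    by (simp add: minor_adjacent_2x2[OF M r s])
  moreover have "M $$ (r,s) * M $$ (Suc r, Suc s) > 0" "M $$ (r, Suc s) * M $$ (Suc r, s) > 0"
    using pos r s by auto
  ultimately show "0 \<le> adjacent_ratio M r s" "adjacent_ratio M r s \<le> 1"
    unfolding adjacent_ratio_def by auto
qed

lemma ASM_le_imp_mono_eval_le:
  assumes A: "is_ASM n A" and B: "is_ASM n B" and le: "ASM_le n A B"
    and T: "TNN_mat n M" and pos: "\<And>i j. i < n \<Longrightarrow> j < n \<Longrightarrow> M $$ (i,j) > 0"
  shows "mono_eval n B M \<le> mono_eval n A M"
proof -
  have nz: "nonzero_entries n M" using pos unfolding nonzero_entries_def by force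
  let ?y = "\<lambda>r s. adjacent_ratio M r s powi (corner_sum A r s - corner_sum B r s)"
  have y: "0 \<le> ?y r s \<and> ?y r s \<le> 1" if "r < n - 1" "s < n - 1" for r s
  proof -
    have "corner_sum A r s - corner_sum B r s \<ge> 0" using le that unfolding ASM_le_def by auto
    thus ?thesis using adjacent_ratio_le_one[OF T pos, of r s] that by (simp add: power_int_le_one)
  qed
  have "(\<Prod>r<n - 1. \<Prod>s<n - 1. ?y r s) \<le> 1"
    by (intro prod_le_1 conjI prod_nonneg) (use y in auto)
  moreover have "mono_eval n A M > 0" unfolding mono_eval_laurent_monomial by (rule laurent_monomial_pos[OF pos])
  ultimately show ?thesis
    unfolding mono_eval_ASM_adjacent_ratios[OF A B nz] by (simp add: mult_left_le)
qed

lemma diff_eval_tendsto: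
  assumes "entrywise_tendsto n f M F" "diff_defined n A B M"
  shows "((\<lambda>x. diff_eval n A B (f x)) \<longlongrightarrow> diff_eval n A B M) F"
  unfolding diff_eval_def mono_eval_laurent_monomial
  using assms unfolding diff_defined_def
  by (intro tendsto_diff tendsto_laurent_monomial) (force simp: not_less)+

lemma ASM_mono_eval_zero_mat:
  assumes A: "is_ASM n A" and n: "0 < n" and nonneg: "\<And>i j. i < n \<Longrightarrow> j < n \<Longrightarrow> A $$ (i,j) \<ge> 0"
  shows "mono_eval n A (0\<^sub>m n n) = 0"
proof -
  have "(\<Sum>q<n. A $$ (0,q)) = 1" using A n unfolding is_ASM_def by auto
  then obtain q where q: "q < n" "A $$ (0,q) \<noteq> 0" by (metis lessThan_iff sum.neutral zero_neq_one)
  hence "(0\<^sub>m n n $$ (0,q) :: real) powi A $$ (0,q) = 0" using n nonneg[of 0 q] by simp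
  thus ?thesis unfolding mono_eval_def using n q(1) by (intro prod_zero bexI[of _ 0] bexI[of _ q]) auto
qed

lemma ASM_le_imp_diff_TNN:
  assumes A: "is_ASM n A" and B: "is_ASM n B" and le: "ASM_le n A B"
  shows "diff_TNN n A B"
  unfolding diff_TNN_def
proof (intro allI impI, elim conjE)
  fix M assume T: "TNN_mat n M" and D: "diff_defined n A B M"
  have M: "M \<in> carrier_mat n n" using T by (simp add: TNN_mat_def)
  show "0 \<le> diff_eval n A B M"
  proof (cases "\<exists>a<n. \<exists>b<n. M $$ (a,b) > 0")
    case True
    then obtain a b where ab: "a < n" "b < n" "M $$ (a,b) > 0" by auto
    \<comment> \<open>smoothing makes all entries positive, where the inequality is already known\<close>
    have "eventually (\<lambda>t. 0 \<le> diff_eval n A B (smoothing n t M)) (at_right 0)"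
      unfolding eventually_at_right_field diff_eval_def
      using ASM_le_imp_mono_eval_le[OF A B le TNN_smoothing[OF T] smoothing_pos[OF T _ ab]]
      by (intro exI[of _ 1]) auto
    thus ?thesis
      by (rule tendsto_lowerbound[OF diff_eval_tendsto[OF entrywise_tendsto_smoothing[OF M] D]]) simp
  next
    case False
    hence "M $$ (i,j) = 0" if "i < n" "j < n" for i j
      using TNN_mat_entry_nonneg[OF T that] that by (meson not_less order.antisym)
    hence zero: "M = 0\<^sub>m n n" using M by (auto intro!: eq_matI)
    show ?thesis
    proof (cases "n = 0")
      case False
      have "A $$ (i,j) \<ge> 0" "B $$ (i,j) \<ge> 0" if "i < n" "j < n" for i j
        using D that unfolding zero diff_defined_def by (auto simp: not_less)
      thus ?thesis
        using ASM_mono_eval_zero_mat[OF A] ASM_mono_eval_zero_mat[OF B] False by (simp add: diff_eval_def zero)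
    qed (simp add: diff_eval_def mono_eval_def)
  qed
qed

section \<open>The ASM order implies the subtraction-free Laurent property\<close>

lemma prod_list_map_product:
  "prod_list (map f (List.product [0..<a] [0..<b])) = (\<Prod>r<a. \<Prod>s<b. (f (r,s) :: 'a::comm_monoid_mult))"
  by (simp add: prod.distinct_set_conv_list[symmetric] distinct_product atLeast0LessThan prod.cartesian_product)

lemma prod_list_map_filter:
  "prod_list (map f (filter P xs)) = prod_list (map (\<lambda>x. if P x then f x else (1::'a::comm_monoid_mult)) xs)"
  by (induction xs) auto

lemma prod_list_map_divide:
  "prod_list (map (\<lambda>x. f x / g x) xs) = prod_list (map f xs) / prod_list (map g xs :: 'a::field list)"
  by (induction xs) auto

lemma prod_list_map_concat_replicate:
  "prod_list (map f (concat (map (\<lambda>x. replicate (k x) x) xs))) = prod_list (map (\<lambda>x. f x ^ k x) xs)"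
  for f :: "'b \<Rightarrow> 'a::comm_monoid_mult"
  by (induction xs) (auto simp: prod_list_replicate)

lemma minor_prod_append [simp]: "minor_prod M (ms @ ms') = minor_prod M ms * minor_prod M ms'"
  unfolding minor_prod_def by simp

definition entry_minor :: "nat \<times> nat \<Rightarrow> minor_idx" where
  "entry_minor x = ({fst x}, {snd x})"

definition diag_minors :: "nat \<times> nat \<Rightarrow> minor_idx list" where
  "diag_minors x = [entry_minor x, entry_minor (Suc (fst x), Suc (snd x))]"

definition antidiag_minors :: "nat \<times> nat \<Rightarrow> minor_idx list" where
  "antidiag_minors x = [entry_minor (fst x, Suc (snd x)), entry_minor (Suc (fst x), snd x)]"

definition block_minor :: "nat \<times> nat \<Rightarrow> minor_idx" where
  "block_minor x = ({fst x, Suc (fst x)}, {snd x, Suc (snd x)})"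

definition diag_prod :: "real mat \<Rightarrow> nat \<times> nat \<Rightarrow> real" where
  "diag_prod M x = M $$ x * M $$ (Suc (fst x), Suc (snd x))"

definition antidiag_prod :: "real mat \<Rightarrow> nat \<times> nat \<Rightarrow> real" where
  "antidiag_prod M x = M $$ (fst x, Suc (snd x)) * M $$ (Suc (fst x), snd x)"

text \<open>The terms of
  \<open>\<Prod>D\<^sub>i - \<Prod>N\<^sub>i = \<Sum>\<^sub>k N\<^sub>1\<cdots>N\<^sub>k\<^sub>-\<^sub>1 (D\<^sub>k - N\<^sub>k) D\<^sub>k\<^sub>+\<^sub>1\<cdots>D\<^sub>m\<close>,
  where \<open>D\<^sub>k - N\<^sub>k\<close> is a contiguous 2\<times>2 minor.\<close>

fun telescope :: "(nat \<times> nat) list \<Rightarrow> minor_idx list list" where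
  "telescope [] = []"
| "telescope (x # xs) = (block_minor x # concat (map diag_minors xs)) # map (\<lambda>ms. antidiag_minors x @ ms) (telescope xs)"

definition in_block_range :: "nat \<Rightarrow> (nat \<times> nat) list \<Rightarrow> bool" where
  "in_block_range n xs \<longleftrightarrow> (\<forall>x\<in>set xs. Suc (fst x) < n \<and> Suc (snd x) < n)"

lemma minor_prod_entry_minors:
  "M \<in> carrier_mat n n \<Longrightarrow> \<forall>x\<in>set xs. fst x < n \<and> snd x < n \<Longrightarrow>
    minor_prod M (map entry_minor xs) = prod_list (map (($$) M) xs)"
  unfolding minor_prod_def entry_minor_def by (induction xs) (auto simp: minor_singleton)

lemma minor_prod_diag_minors:
  "M \<in> carrier_mat n n \<Longrightarrow> in_block_range n xs \<Longrightarrow>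
    minor_prod M (concat (map diag_minors xs)) = prod_list (map (diag_prod M) xs)"
  unfolding in_block_range_def
  by (induction xs) (auto simp: minor_prod_def diag_minors_def diag_prod_def entry_minor_def minor_singleton)

lemma sum_list_minor_prod_telescope:
  assumes M: "M \<in> carrier_mat n n"
  shows "in_block_range n xs \<Longrightarrow>
    sum_list (map (minor_prod M) (telescope xs)) = prod_list (map (diag_prod M) xs) - prod_list (map (antidiag_prod M) xs)"
proof (induction xs)
  case (Cons x xs)
  have x: "Suc (fst x) < n" "Suc (snd x) < n" and xs: "in_block_range n xs"
    using Cons.prems by (auto simp: in_block_range_def)
  have "sum_list (map (minor_prod M) (telescope (x # xs)))
      = minor_prod M [block_minor x] * minor_prod M (concat (map diag_minors xs))
        + sum_list (map (\<lambda>ms. minor_prod M (antidiag_minors x) * minor_prod M ms) (telescope xs))"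
    by (simp add: comp_def minor_prod_def)
  also have "minor_prod M [block_minor x] = diag_prod M x - antidiag_prod M x"
    using minor_adjacent_2x2[OF M x] by (simp add: minor_prod_def block_minor_def diag_prod_def antidiag_prod_def)
  also have "minor_prod M (antidiag_minors x) = antidiag_prod M x"
    using M x by (simp add: minor_prod_def antidiag_minors_def antidiag_prod_def entry_minor_def minor_singleton)
  also have "sum_list (map (\<lambda>ms. antidiag_prod M x * minor_prod M ms) (telescope xs))
      = antidiag_prod M x * (prod_list (map (diag_prod M) xs) - prod_list (map (antidiag_prod M) xs))"
    using Cons.IH[OF xs] by (simp add: sum_list_const_mult comp_def)
  finally show ?case by (simp add: minor_prod_diag_minors[OF M xs] algebra_simps)
qed simp

lemma valid_minor_telescope:
  "in_block_range n xs \<Longrightarrow> ms \<in> set (telescope xs) \<Longrightarrow> (I,J) \<in> set ms \<Longrightarrow> valid_minor n I J"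
proof (induction xs arbitrary: ms)
  case (Cons x xs)
  have x: "Suc (fst x) < n" "Suc (snd x) < n" and xs: "in_block_range n xs"
    using Cons.prems(1) by (auto simp: in_block_range_def)
  from Cons.prems(2)
  consider "ms = block_minor x # concat (map diag_minors xs)"
    | ms' where "ms' \<in> set (telescope xs)" "ms = antidiag_minors x @ ms'"
    by auto
  thus ?case
  proof cases
    case 1
    thus ?thesis using Cons.prems(1,3)
      by (auto simp: in_block_range_def block_minor_def diag_minors_def entry_minor_def valid_minor_def)
  next
    case 2
    thus ?thesis using Cons.IH[OF xs] Cons.prems(3) x
      by (auto simp: antidiag_minors_def entry_minor_def valid_minor_def)
  qed
qed simp

definition index_pairs :: "nat \<Rightarrow> (nat \<times> nat) list" where
  "index_pairs n = List.product [0..<n] [0..<n]"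

lemma mono_eval_ASM_fraction:
  assumes A: "is_ASM n A"
  shows "mono_eval n A M = prod_list (map (($$) M) (filter (\<lambda>x. A $$ x = 1) (index_pairs n)))
    / prod_list (map (($$) M) (filter (\<lambda>x. A $$ x = -1) (index_pairs n)))"
proof -
  have "M $$ x powi A $$ x = (if A $$ x = 1 then M $$ x else 1) / (if A $$ x = -1 then M $$ x else 1)"
    if "x \<in> set (index_pairs n)" for x
  proof -
    have "A $$ x \<in> {-1, 0, 1}" using A that unfolding is_ASM_def index_pairs_def by fastforce
    thus ?thesis by (auto simp: power_int_minus1_right divide_inverse)
  qed
  hence "prod_list (map (\<lambda>x. M $$ x powi A $$ x) (index_pairs n))
      = prod_list (map (\<lambda>x. (if A $$ x = 1 then M $$ x else 1) / (if A $$ x = -1 then M $$ x else 1)) (index_pairs n))"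
    by (intro arg_cong[where f = prod_list] map_cong) auto
  thus ?thesis
    unfolding mono_eval_def prod_list_map_filter prod_list_map_divide[symmetric]
    by (simp add: index_pairs_def prod_list_map_product[where f = "\<lambda>x. M $$ x powi A $$ x", simplified])
qed

definition corner_gap_blocks :: "nat \<Rightarrow> int mat \<Rightarrow> int mat \<Rightarrow> (nat \<times> nat) list" where
  "corner_gap_blocks n A B = concat (map (\<lambda>x. replicate (nat (corner_sum A (fst x) (snd x) - corner_sum B (fst x) (snd x))) x)
     (List.product [0..<n - 1] [0..<n - 1]))"

lemma in_block_range_corner_gap_blocks: "in_block_range n (corner_gap_blocks n A B)"
  by (auto simp: in_block_range_def corner_gap_blocks_def)

lemma prod_adjacent_ratios_corner_gap_blocks:
  assumes le: "ASM_le n A B"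
  shows "prod_list (map (antidiag_prod M) (corner_gap_blocks n A B)) / prod_list (map (diag_prod M) (corner_gap_blocks n A B))
    = (\<Prod>r<n - 1. \<Prod>s<n - 1. adjacent_ratio M r s powi (corner_sum A r s - corner_sum B r s))"
proof -
  let ?c = "\<lambda>r s. corner_sum A r s - corner_sum B r s"
  have "antidiag_prod M x ^ k / diag_prod M x ^ k = adjacent_ratio M (fst x) (snd x) ^ k" for x k
    by (simp add: antidiag_prod_def diag_prod_def adjacent_ratio_def power_divide)
  hence "prod_list (map (antidiag_prod M) (corner_gap_blocks n A B)) / prod_list (map (diag_prod M) (corner_gap_blocks n A B))
      = prod_list (map (\<lambda>x. adjacent_ratio M (fst x) (snd x) ^ nat (?c (fst x) (snd x))) (List.product [0..<n - 1] [0..<n - 1]))"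
    unfolding prod_list_map_divide[symmetric] corner_gap_blocks_def prod_list_map_concat_replicate by simp
  also have "\<dots> = (\<Prod>r<n - 1. \<Prod>s<n - 1. adjacent_ratio M r s ^ nat (?c r s))"
    by (subst prod_list_map_product) simp
  also have "\<dots> = (\<Prod>r<n - 1. \<Prod>s<n - 1. adjacent_ratio M r s powi ?c r s)"
    using le unfolding ASM_le_def by (intro prod.cong refl) (simp add: power_int_nonneg_exp)
  finally show ?thesis .
qed

text \<open>The product of all entries is put into both \<open>F\<close> and \<open>G\<close>, so that \<open>G \<noteq> 0\<close> forces all entries
  to be nonzero.\<close>

definition SFL_numerator :: "nat \<Rightarrow> int mat \<Rightarrow> int mat \<Rightarrow> (nat \<times> minor_idx list) list" where
  "SFL_numerator n A B = map (\<lambda>ms. (1, map entry_minor (filter (\<lambda>x. A $$ x = 1) (index_pairs n)) @ ms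
     @ map entry_minor (index_pairs n))) (telescope (corner_gap_blocks n A B))"

definition SFL_denominator :: "nat \<Rightarrow> int mat \<Rightarrow> int mat \<Rightarrow> minor_idx list" where
  "SFL_denominator n A B = map entry_minor (filter (\<lambda>x. A $$ x = -1) (index_pairs n))
     @ concat (map diag_minors (corner_gap_blocks n A B)) @ map entry_minor (index_pairs n)"

lemma valid_minor_SFL_numerator:
  "\<forall>(c,ms)\<in>set (SFL_numerator n A B). \<forall>(I,J)\<in>set ms. valid_minor n I J"
  using valid_minor_telescope[OF in_block_range_corner_gap_blocks]
  by (fastforce simp: SFL_numerator_def entry_minor_def valid_minor_def index_pairs_def)

lemma valid_minor_SFL_denominator: "\<forall>(I,J)\<in>set (SFL_denominator n A B). valid_minor n I J"
  using in_block_range_corner_gap_blocks[of n A B]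
  by (fastforce simp: SFL_denominator_def entry_minor_def valid_minor_def index_pairs_def in_block_range_def diag_minors_def)

lemma ASM_le_imp_diff_SFL:
  assumes A: "is_ASM n A" and B: "is_ASM n B" and le: "ASM_le n A B"
  shows "diff_SFL n A B"
  unfolding diff_SFL_def
proof (intro exI conjI allI impI; (elim conjE)?)
  show "\<forall>(c,ms)\<in>set (SFL_numerator n A B). \<forall>(I,J)\<in>set ms. valid_minor n I J"
    by (rule valid_minor_SFL_numerator)
  show "\<forall>(I,J)\<in>set (SFL_denominator n A B). valid_minor n I J"
    by (rule valid_minor_SFL_denominator)
  fix M assume M: "M \<in> carrier_mat n n" and G0: "minor_prod M (SFL_denominator n A B) \<noteq> 0"
  let ?K = "corner_gap_blocks n A B"
  define pos where "pos = prod_list (map (($$) M) (filter (\<lambda>x. A $$ x = 1) (index_pairs n)))"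
  define neg where "neg = prod_list (map (($$) M) (filter (\<lambda>x. A $$ x = -1) (index_pairs n)))"
  define all where "all = prod_list (map (($$) M) (index_pairs n))"
  define diag where "diag = prod_list (map (diag_prod M) ?K)"
  define anti where "anti = prod_list (map (antidiag_prod M) ?K)"
  have entries: "minor_prod M (map entry_minor (filter P (index_pairs n))) = prod_list (map (($$) M) (filter P (index_pairs n)))"
    "minor_prod M (map entry_minor (index_pairs n)) = all" for P
    unfolding all_def by (simp_all add: minor_prod_entry_minors[OF M] index_pairs_def)
  have G: "minor_prod M (SFL_denominator n A B) = neg * diag * all"
    unfolding SFL_denominator_def neg_def diag_def
    by (simp add: entries minor_prod_diag_minors[OF M in_block_range_corner_gap_blocks])
  have F: "minor_poly M (SFL_numerator n A B) = pos * all * (diag - anti)"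
  proof -
    have "minor_poly M (SFL_numerator n A B) = sum_list (map (\<lambda>ms. pos * all * minor_prod M ms) (telescope ?K))"
      unfolding minor_poly_def SFL_numerator_def pos_def
      by (simp add: comp_def entries algebra_simps)
    also have "\<dots> = pos * all * (diag - anti)"
      unfolding sum_list_const_mult diag_def anti_def
      using sum_list_minor_prod_telescope[OF M in_block_range_corner_gap_blocks] by (simp add: comp_def)
    finally show ?thesis .
  qed
  have nonzero: "all \<noteq> 0" "neg \<noteq> 0" "diag \<noteq> 0" using G0 G by auto
  hence "nonzero_entries n M"
    unfolding nonzero_entries_def all_def index_pairs_def prod_list_map_product by simp
  hence "mono_eval n B M = pos / neg * (anti / diag)"
    using mono_eval_ASM_adjacent_ratios[OF A B] mono_eval_ASM_fraction[OF A]
      prod_adjacent_ratios_corner_gap_blocks[OF le]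
    by (simp add: pos_def neg_def anti_def diag_def)
  thus "diff_eval n A B M = minor_poly M (SFL_numerator n A B) / minor_prod M (SFL_denominator n A B)"
    unfolding diff_eval_def F G mono_eval_ASM_fraction[OF A] pos_def[symmetric] neg_def[symmetric]
    using nonzero by (simp add: field_simps)
qed

section \<open>Total nonnegativity and the SFL property imply the ASM order\<close>

lemma prod_power_int_const:
  assumes "(c::'a::field) \<noteq> 0" "finite X"
  shows "(\<Prod>x\<in>X. c powi f x) = c powi (\<Sum>x\<in>X. f x)"
  using assms(2) by (induction X rule: finite_induct) (auto simp: power_int_add assms(1))

lemma mono_eval_mult:
  "mono_eval n A (mat n n (\<lambda>x. f x * g x)) = mono_eval n A (mat n n f) * mono_eval n A (mat n n g)"
  unfolding mono_eval_def by (simp add: power_int_mult_distrib prod.distrib)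

lemma sum_corner_indicator:
  assumes "i < n" "j < n"
  shows "(\<Sum>p<n. \<Sum>q<n. of_bool (p \<le> i \<and> q \<le> j) * A $$ (p,q)) = corner_sum A i j"
proof -
  have "{..<n} \<inter> {p. p \<le> i} = {..i}" "{..<n} \<inter> {q. q \<le> j} = {..j}" using assms by auto
  thus ?thesis unfolding corner_sum_def by (simp add: of_bool_conj mult.assoc sum_distrib_left[symmetric])
qed

lemma mono_eval_corner_power:
  assumes "(c::real) \<noteq> 0" "i < n" "j < n"
  shows "mono_eval n A (mat n n (\<lambda>(p,q). c powi of_bool (p \<le> i \<and> q \<le> j))) = c powi corner_sum A i j"
  using assms unfolding mono_eval_def
  by (simp add: power_int_mult[symmetric] prod_power_int_const sum_corner_indicator[symmetric] mult.commute)

definition step_weight :: "nat \<Rightarrow> nat \<Rightarrow> real" where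
  "step_weight i p = (if p \<le> i then 1 else 2)"

lemma mono_eval_step_cauchy:
  assumes A: "is_ASM n A" and i: "i < n" and j: "j < n"
  shows "mono_eval n A (cauchy_mat n (step_weight i) (step_weight j))
    = (9/8) powi corner_sum A i j * ((4/3) powi int (Suc i) * (4/3) powi int (Suc j) * (1/4) powi int n)"
proof -
  let ?P = "\<lambda>c k l. mat n n (\<lambda>(p,q). (c::real) powi of_bool (p \<le> k \<and> q \<le> l))"
  have n: "n - 1 < n" using i by simp
  have "cauchy_mat n (step_weight i) (step_weight j)
      = mat n n (\<lambda>x. ?P (9/8) i j $$ x * ?P (4/3) i (n - 1) $$ x * ?P (4/3) (n - 1) j $$ x * ?P (1/4) (n - 1) (n - 1) $$ x)"
    by (auto simp: cauchy_mat_def step_weight_def intro!: eq_matI)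
  also have "mono_eval n A \<dots> = (9/8) powi corner_sum A i j * (4/3) powi corner_sum A i (n - 1)
      * (4/3) powi corner_sum A (n - 1) j * (1/4) powi corner_sum A (n - 1) (n - 1)"
    by (simp only: mono_eval_mult mono_eval_corner_power i j n mat_index_eta mat_carrier)
  also have "\<dots> = (9/8) powi corner_sum A i j * ((4/3) powi int (Suc i) * (4/3) powi int (Suc j) * (1/4) powi int n)"
    using i j by (simp add: corner_sum_rect_sum ASM_rect_sum_all_rows[OF A] ASM_rect_sum_all_cols[OF A])
  finally show ?thesis .
qed

lemma exists_TP_diff_eval_neg:
  assumes A: "is_ASM n A" and B: "is_ASM n B" and i: "i < n" and j: "j < n"
    and lt: "corner_sum A i j < corner_sum B i j"
  shows "\<exists>M. TP_mat n M \<and> diff_eval n A B M < 0"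
proof -
  define f where "f e = cauchy_mat n (\<lambda>p. step_weight i p + e * real p) (\<lambda>q. step_weight j q + e * real q)" for e :: real
  let ?M0 = "cauchy_mat n (step_weight i) (step_weight j)"
  have weight: "step_weight k p \<ge> 1" "p \<le> q \<Longrightarrow> step_weight k p \<le> step_weight k q" for k p q
    by (auto simp: step_weight_def)
  have pos: "step_weight i p + step_weight j q \<noteq> 0" for p q
    using weight(1)[of i p] weight(1)[of j q] by linarith
  have "entrywise_tendsto n f ?M0 (at_right 0)"
    unfolding entrywise_tendsto_def f_def cauchy_mat_def
    using pos by (auto intro!: tendsto_eq_intros)
  moreover have "diff_defined n A B ?M0"
    using pos by (simp add: diff_defined_def cauchy_mat_def)
  moreover have "diff_eval n A B ?M0 < 0"
    unfolding diff_eval_def mono_eval_step_cauchy[OF A i j] mono_eval_step_cauchy[OF B i j]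
    using power_int_strict_increasing[OF lt, of "9/8::real"] by simp
  ultimately have "eventually (\<lambda>e. diff_eval n A B (f e) < 0) (at_right 0)"
    by (rule order_tendstoD(2)[OF diff_eval_tendsto])
  then obtain e where e: "e > 0" "diff_eval n A B (f e) < 0"
    using eventually_happens[OF eventually_conj[OF eventually_at_right_less]] by fastforce
  have "step_weight k p + e * real p < step_weight k q + e * real q" if "p < q" for k p q
    using weight(2)[of p q k] e(1) that by (simp add: add_le_less_mono)
  moreover have "0 < step_weight k p + e * real p" for k p
    using weight(1)[of k p] e(1) by (simp add: add_pos_nonneg)
  ultimately have "TP_mat n (f e)"
    unfolding f_def by (intro cauchy_mat_TP)
  with e(2) show ?thesis by blast
qed

lemma nonneg_on_TP_imp_ASM_le:
  assumes A: "is_ASM n A" and B: "is_ASM n B" and nonneg: "\<And>M. TP_mat n M \<Longrightarrow> diff_eval n A B M \<ge> 0"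
  shows "ASM_le n A B"
  unfolding ASM_le_def
proof (intro allI impI)
  fix i j assume "i < n" "j < n"
  thus "corner_sum B i j \<le> corner_sum A i j"
    using exists_TP_diff_eval_neg[OF A B] nonneg by (meson not_le not_less)
qed

lemma diff_defined_TP: "TP_mat n M \<Longrightarrow> diff_defined n A B M"
  unfolding diff_defined_def using TP_mat_entry_pos by fastforce

lemma diff_TNN_imp_ASM_le:
  "is_ASM n A \<Longrightarrow> is_ASM n B \<Longrightarrow> diff_TNN n A B \<Longrightarrow> ASM_le n A B"
  by (rule nonneg_on_TP_imp_ASM_le) (auto simp: diff_TNN_def TP_imp_TNN diff_defined_TP)

lemma prod_list_pos: "(\<And>x. x \<in> set xs \<Longrightarrow> (0::'a::linordered_semidom) < x) \<Longrightarrow> 0 < prod_list xs"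
  by (induction xs) auto

lemma diff_SFL_imp_ASM_le:
  assumes A: "is_ASM n A" and B: "is_ASM n B" and S: "diff_SFL n A B"
  shows "ASM_le n A B"
proof (rule nonneg_on_TP_imp_ASM_le[OF A B])
  fix M assume T: "TP_mat n M"
  obtain F G where F: "\<forall>(c,ms)\<in>set F. \<forall>(I,J)\<in>set ms. valid_minor n I J"
    and G: "\<forall>(I,J)\<in>set G. valid_minor n I J"
    and eq: "\<And>M. M \<in> carrier_mat n n \<Longrightarrow> diff_defined n A B M \<Longrightarrow> minor_prod M G \<noteq> 0
      \<Longrightarrow> diff_eval n A B M = minor_poly M F / minor_prod M G"
    using S unfolding diff_SFL_def by blast
  have minor_prod_pos: "minor_prod M ms > 0" if "\<forall>(I,J)\<in>set ms. valid_minor n I J" for ms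
    unfolding minor_prod_def using T that by (intro prod_list_pos) (auto simp: TP_mat_def)
  have "minor_prod M G > 0" using G by (rule minor_prod_pos)
  moreover have "minor_poly M F \<ge> 0"
    unfolding minor_poly_def using F minor_prod_pos
    by (intro sum_list_nonneg) (fastforce intro: less_imp_le)
  moreover have "M \<in> carrier_mat n n" using T by (simp add: TP_mat_def)
  ultimately show "diff_eval n A B M \<ge> 0" using eq diff_defined_TP[OF T] by simp
qed

theorem mainTheorem13:
  fixes n :: nat and A B :: "int mat"
  assumes "is_ASM n A" and "is_ASM n B"
  shows "(ASM_le n A B \<longleftrightarrow> diff_TNN n A B) \<and> (diff_TNN n A B \<longleftrightarrow> diff_SFL n A B)"
  using ASM_le_imp_diff_TNN[OF assms] diff_TNN_imp_ASM_le[OF assms]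
    ASM_le_imp_diff_SFL[OF assms] diff_SFL_imp_ASM_le[OF assms]
  by blast

end
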